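(* Let $F$ be a near-idempotent tract, let $J\subseteq\Delta^r_n$ and $J'\subseteq\Delta^{r'}_{n'}$ be M-convex sets, and let $\iota\colon J\to J'$ be a polymatroid embedding. For an $F$-representation $\rho$ of $J'$, define $\iota^*\rho\colon\Delta^r_n\to F$ by $\iota^*\rho(\alpha)=\rho(\iota(\alpha))$ for $\alpha\in J$ and $\iota^*\rho(\alpha)=0$ otherwise. Then $\iota^*\rho$ is an $F$-representation of $J$, and $[\rho]\mapsto[\iota^*\rho]$ is a well-defined map $\iota^*\colon\mathrm{Gr}_{J'}(F)\to\mathrm{Gr}_J(F)$. If $\iota$ is bijective, then $\iota^*$ is bijective.
   Context: Tract: commutative monoid with absorbing $0$, $F^\times=F\setminus\{0\}$ a group, null set $N_F$ an ideal of $\mathbb N[F^\times]$ with unique additive inverses. $F$ is near-idempotent if $1+1\in N_F$ (so $-1=1$) and $1+1+x\in N_F$ for some $x\in F^\times$. M-convex $J\subseteq\Delta^r_n$: nonempty, and for $\alpha,\beta\in J$ and $i$ with $\alpha_i<\beta_i$ there is $j$ with $\alpha_j>\beta_j$ and $\alpha+\epsilon_i-\epsilon_j,\beta-\epsilon_i+\epsilon_j\in J$; $\delta^\mp_J$ = componentwise min/max. For near-idempotent $F$, an $F$-representation of $J$ is $\rho\colon\Delta^r_n\to F$ with support exactly $J$ such that $\sum_{k=0}^s\rho(\alpha-\epsilon_{i_k}+\epsilon_{i_0}+\dots+\epsilon_{i_s})\rho(\alpha+\epsilon_{i_k}+\epsilon_{j_2}+\dots+\epsilon_{j_s})\in N_F$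 for all $2\le s\le r$, $\alpha\in\Delta^{r-s}_n$ with $\delta^-_J\le\alpha$, and $i_0,\dots,i_s,j_2,\dots,j_s\in[n]$ with $\alpha+\epsilon_{i_0}+\dots+\epsilon_{i_s}+\epsilon_{j_2}+\dots+\epsilon_{j_s}\le\delta^+_J$. $\mathrm{Gr}_J(F)$ is the set of $F$-representations modulo $\rho\sim a\rho$ ($a\in F^\times$). Deletion and contraction: for $\nu\in\mathbb N^n$ with $\nu\le\delta^+_J-\alpha$ for some $\alpha\in J$, $J\setminus\nu=\{\alpha\in J:\alpha\le\delta^+_J-\nu\}$; for $\mu\in\mathbb N^n$ with $\mu\le\alpha-\delta^-_J$ for some $\alpha\in J$, $J/\mu=\{\alpha-\mu:\alpha\in J,\ \delta^-_J+\mu\le\alpha\}$. An embedded minor is $J\setminus\nu/\mu+\tau=((J\setminus\nu)/\mu)+\tau$ where $\mu+\delta^-_{J\setminus\nu}\le\alpha\le\delta^+_J-\nu$ for some $\alpha\in J$ and $\tau\in\mathbb Z^n$ with $\tau\ge-\delta^-_{(J\setminus\nu)/\mu}$; its minor embedding is $J\setminus\nu/\mu+\tau\to J$, $\alpha\mapsto\alpha+\mu-\tau$. For $\sigma\in S_n$, $\iota_\sigma\colon J\to\sigma(J)$ permutes coordinates; $\iota_n\colon J\to\iota_n(J)\subseteq\Delta^r_{n+1}$ appends a zero coordinate (extension of variables), and its inverse $\iota_n(J)\to J$ is a restriction of variables. These four kinds of maps are elementary polymatroid embeddings; a polymatroid embedding is a composition of elementary ones (all these sets are M-convex). *)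

theory Defs
  imports Main "HOL-Library.Multiset" "HOL-Combinatorics.Permutations"
begin

text \<open>Elements of N^n are functions nat => nat vanishing at every coordinate l >= n.
  Coordinates are 0,...,n-1 (this is [n]).  In this encoding the extension of variables
  iota_n : Delta^r_n -> Delta^r_(n+1) (appending a zero coordinate) is the identity function.\<close>

type_synonym vec = "nat \<Rightarrow> nat"

definition unitv :: "nat \<Rightarrow> vec" where
  "unitv i = (\<lambda>l. if l = i then 1 else 0)"

definition Delta :: "nat \<Rightarrow> nat \<Rightarrow> vec set" where
  "Delta n r = {\<alpha>. (\<forall>l\<ge>n. \<alpha> l = 0) \<and> (\<Sum>l<n. \<alpha> l) = r}"

definition M_convex :: "nat \<Rightarrow> nat \<Rightarrow> vec set \<Rightarrow> bool" where
  "M_convex n r J \<longleftrightarrow> J \<noteq> {} \<and> J \<subseteq> Delta n r \<and>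
     (\<forall>\<alpha>\<in>J. \<forall>\<beta>\<in>J. \<forall>i<n. \<alpha> i < \<beta> i \<longrightarrow>
        (\<exists>j<n. \<alpha> j > \<beta> j \<and>
           (\<lambda>l. \<alpha> l + unitv i l - unitv j l) \<in> J \<and>
           (\<lambda>l. \<beta> l - unitv i l + unitv j l) \<in> J))"

definition dmin :: "vec set \<Rightarrow> vec" where
  "dmin J = (\<lambda>l. Min ((\<lambda>\<alpha>. \<alpha> l) ` J))"

definition dmax :: "vec set \<Rightarrow> vec" where
  "dmax J = (\<lambda>l. Max ((\<lambda>\<alpha>. \<alpha> l) ` J))"

text \<open>The semiring N[F^x] is modelled by multisets over F with no occurrence of 0.
  Product in N[F^x]:\<close>
definition mult_ms :: "'a::comm_monoid_mult multiset \<Rightarrow> 'a multiset \<Rightarrow> 'a multiset" where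
  "mult_ms M K = sum_mset (image_mset (\<lambda>x. image_mset (\<lambda>y. x * y) K) M)"

text \<open>F is the type 'a (commutative monoid with absorbing 0), N is the null set.\<close>
definition tract :: "'a::{comm_monoid_mult, mult_zero} multiset set \<Rightarrow> bool" where
  "tract N \<longleftrightarrow>
     (0::'a) \<noteq> 1 \<and>
     (\<forall>x y::'a. x \<noteq> 0 \<longrightarrow> y \<noteq> 0 \<longrightarrow> x * y \<noteq> 0) \<and>
     (\<forall>x::'a. x \<noteq> 0 \<longrightarrow> (\<exists>y. x * y = 1)) \<and>
     (\<forall>M\<in>N. 0 \<notin># M) \<and>
     {#} \<in> N \<and>
     (\<forall>M\<in>N. \<forall>K\<in>N. M + K \<in> N) \<and>
     (\<forall>M\<in>N. \<forall>K. 0 \<notin># K \<longrightarrow> mult_ms K M \<in> N) \<and>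
     (\<forall>a::'a. a \<noteq> 0 \<longrightarrow> (\<exists>!b. b \<noteq> 0 \<and> {#a, b#} \<in> N))"

definition near_idempotent :: "'a::{comm_monoid_mult, mult_zero} multiset set \<Rightarrow> bool" where
  "near_idempotent N \<longleftrightarrow> {#1, 1#} \<in> N \<and> (\<exists>x::'a. x \<noteq> 0 \<and> {#1, 1, x#} \<in> N)"

definition fsum :: "nat set \<Rightarrow> (nat \<Rightarrow> 'a::zero) \<Rightarrow> 'a multiset" where
  "fsum K f = filter_mset (\<lambda>x. x \<noteq> 0) (image_mset f (mset_set K))"

definition is_rep :: "'a::{comm_monoid_mult, mult_zero} multiset set \<Rightarrow> nat \<Rightarrow> nat \<Rightarrow> vec set
    \<Rightarrow> (vec \<Rightarrow> 'a) \<Rightarrow> bool" where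
  "is_rep N n r J \<rho> \<longleftrightarrow>
     {\<alpha>. \<rho> \<alpha> \<noteq> 0} = J \<and>
     (\<forall>s \<alpha> (i::nat \<Rightarrow> nat) (j::nat \<Rightarrow> nat).
        2 \<le> s \<longrightarrow> s \<le> r \<longrightarrow> \<alpha> \<in> Delta n (r - s) \<longrightarrow> dmin J \<le> \<alpha> \<longrightarrow>
        (\<forall>k\<in>{0..s}. i k < n) \<longrightarrow> (\<forall>k\<in>{2..s}. j k < n) \<longrightarrow>
        (\<lambda>l. \<alpha> l + (\<Sum>m=0..s. unitv (i m) l) + (\<Sum>m=2..s. unitv (j m) l)) \<le> dmax J \<longrightarrow>
        fsum {0..s} (\<lambda>k.
            \<rho> (\<lambda>l. \<alpha> l + (\<Sum>m=0..s. unitv (i m) l) - unitv (i k) l) *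
            \<rho> (\<lambda>l. \<alpha> l + unitv (i k) l + (\<Sum>m=2..s. unitv (j m) l))) \<in> N)"

definition reps :: "'a::{comm_monoid_mult, mult_zero} multiset set \<Rightarrow> nat \<Rightarrow> nat \<Rightarrow> vec set
    \<Rightarrow> (vec \<Rightarrow> 'a) set" where
  "reps N n r J = {\<rho>. is_rep N n r J \<rho>}"

definition rep_rel :: "'a::{comm_monoid_mult, mult_zero} multiset set \<Rightarrow> nat \<Rightarrow> nat \<Rightarrow> vec set
    \<Rightarrow> ((vec \<Rightarrow> 'a) \<times> (vec \<Rightarrow> 'a)) set" where
  "rep_rel N n r J = {(\<rho>, \<sigma>). \<rho> \<in> reps N n r J \<and> \<sigma> \<in> reps N n r J \<and>
                         (\<exists>a. a \<noteq> 0 \<and> \<sigma> = (\<lambda>\<beta>. a * \<rho> \<beta>))}"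

definition Gr :: "'a::{comm_monoid_mult, mult_zero} multiset set \<Rightarrow> nat \<Rightarrow> nat \<Rightarrow> vec set
    \<Rightarrow> (vec \<Rightarrow> 'a) set set" where
  "Gr N n r J = reps N n r J // rep_rel N n r J"

definition rep_class :: "'a::{comm_monoid_mult, mult_zero} multiset set \<Rightarrow> nat \<Rightarrow> nat \<Rightarrow> vec set
    \<Rightarrow> (vec \<Rightarrow> 'a) \<Rightarrow> (vec \<Rightarrow> 'a) set" where
  "rep_class N n r J \<rho> = rep_rel N n r J `` {\<rho>}"

definition deletion :: "vec set \<Rightarrow> vec \<Rightarrow> vec set" where
  "deletion J \<nu> = {\<alpha>\<in>J. \<alpha> \<le> (\<lambda>l. dmax J l - \<nu> l)}"

definition contraction :: "vec set \<Rightarrow> vec \<Rightarrow> vec set" where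
  "contraction J \<mu> = {(\<lambda>l. \<alpha> l - \<mu> l) | \<alpha>. \<alpha> \<in> J \<and> (\<lambda>l. dmin J l + \<mu> l) \<le> \<alpha>}"

definition translate :: "vec set \<Rightarrow> (nat \<Rightarrow> int) \<Rightarrow> vec set" where
  "translate K \<tau> = (\<lambda>\<beta> l. nat (int (\<beta> l) + \<tau> l)) ` K"

definition emb_minor :: "vec set \<Rightarrow> vec \<Rightarrow> vec \<Rightarrow> (nat \<Rightarrow> int) \<Rightarrow> vec set" where
  "emb_minor J \<nu> \<mu> \<tau> = translate (contraction (deletion J \<nu>) \<mu>) \<tau>"

inductive elem_emb :: "nat \<Rightarrow> nat \<Rightarrow> vec set \<Rightarrow> nat \<Rightarrow> nat \<Rightarrow> vec set \<Rightarrow> (vec \<Rightarrow> vec) \<Rightarrow> bool" where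
  minor:
    "\<lbrakk> M_convex n r' J'; M_convex n r (emb_minor J' \<nu> \<mu> \<tau>);
       \<forall>l\<ge>n. \<nu> l = 0; \<forall>l\<ge>n. \<mu> l = 0; \<forall>l\<ge>n. \<tau> l = 0;
       \<exists>\<alpha>\<in>J'. \<nu> \<le> (\<lambda>l. dmax J' l - \<alpha> l);
       \<exists>\<alpha>\<in>J'. (\<lambda>l. \<mu> l + dmin (deletion J' \<nu>) l) \<le> \<alpha> \<and> \<alpha> \<le> (\<lambda>l. dmax J' l - \<nu> l);
       \<forall>l. - int (dmin (contraction (deletion J' \<nu>) \<mu>) l) \<le> \<tau> l \<rbrakk>
     \<Longrightarrow> elem_emb n r (emb_minor J' \<nu> \<mu> \<tau>) n r' J' (\<lambda>\<alpha> l. nat (int (\<alpha> l) + int (\<mu> l) - \<tau> l))"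
| perm:
    "\<lbrakk> \<sigma> permutes {..<n}; M_convex n r J; M_convex n r ((\<lambda>\<alpha>. \<alpha> \<circ> inv \<sigma>) ` J) \<rbrakk>
     \<Longrightarrow> elem_emb n r J n r ((\<lambda>\<alpha>. \<alpha> \<circ> inv \<sigma>) ` J) (\<lambda>\<alpha>. \<alpha> \<circ> inv \<sigma>)"
| extension:
    "\<lbrakk> M_convex n r J; M_convex (Suc n) r J \<rbrakk> \<Longrightarrow> elem_emb n r J (Suc n) r J id"
| restriction:
    "\<lbrakk> M_convex n r J; M_convex (Suc n) r J \<rbrakk> \<Longrightarrow> elem_emb (Suc n) r J n r J id"

inductive poly_emb :: "nat \<Rightarrow> nat \<Rightarrow> vec set \<Rightarrow> nat \<Rightarrow> nat \<Rightarrow> vec set \<Rightarrow> (vec \<Rightarrow> vec) \<Rightarrow> bool" where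
  base: "elem_emb n r J n' r' J' f \<Longrightarrow> poly_emb n r J n' r' J' f"
| comp: "\<lbrakk> poly_emb n r J n1 r1 J1 f; elem_emb n1 r1 J1 n' r' J' g \<rbrakk>
         \<Longrightarrow> poly_emb n r J n' r' J' (g \<circ> f)"

definition pullback :: "vec set \<Rightarrow> (vec \<Rightarrow> vec) \<Rightarrow> (vec \<Rightarrow> 'a::zero) \<Rightarrow> vec \<Rightarrow> 'a" where
  "pullback J \<iota> \<rho> = (\<lambda>\<alpha>. if \<alpha> \<in> J then \<rho> (\<iota> \<alpha>) else 0)"

definition Gr_pullback :: "'a::{comm_monoid_mult, mult_zero} multiset set \<Rightarrow> nat \<Rightarrow> nat \<Rightarrow> vec set
    \<Rightarrow> nat \<Rightarrow> nat \<Rightarrow> vec set \<Rightarrow> (vec \<Rightarrow> vec) \<Rightarrow> (vec \<Rightarrow> 'a) set \<Rightarrow> (vec \<Rightarrow> 'a) set" where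
  "Gr_pullback N n r J n' r' J' \<iota> C = rep_class N n r J (pullback J \<iota> (SOME \<rho>. \<rho> \<in> C))"

end

theory Submission
  imports Defs
begin

(* Each elementary polymatroid embedding acts on the bounding box [dmin J, dmax J] of its
   source as an injective affine map v |-> v o p + d: a translation for embedded minors, a
   relabelling of the coordinates for permutations, and the identity for extension and
   restriction of variables.  Such a map sends every exchange relation demanded of the
   pullback, term by term, to an exchange relation of rho, as long as the target meets the
   image of the box only in the image of the source; for minors this holds because the image
   is cut out of J' by coordinatewise bounds.  Pullback commutes with composition and with
   scaling, so it descends to the Grassmannians.  If iota is bijective, so is every elementary
   step, and its inverse is again a translation, a permutation or an identity. *)

definition bounding_box :: "vec set \<Rightarrow> vec set" where
  "bounding_box J = {v. dmin J \<le> v \<and> v \<le> dmax J}"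

lemma finite_Delta: "finite (Delta n r)"
proof -
  have "Delta n r \<subseteq> (\<lambda>g l. if l < n then g l else 0) ` ({..<n} \<rightarrow>\<^sub>E {..r})"
  proof
    fix \<alpha> assume "\<alpha> \<in> Delta n r"
    hence vanish: "\<forall>l\<ge>n. \<alpha> l = 0" and sum: "(\<Sum>l<n. \<alpha> l) = r" by (auto simp: Delta_def)
    have "\<alpha> l \<le> r" if "l < n" for l
      using member_le_sum[of l "{..<n}" \<alpha>] that sum by auto
    hence "restrict \<alpha> {..<n} \<in> {..<n} \<rightarrow>\<^sub>E {..r}" by auto
    moreover have "\<alpha> = (\<lambda>l. if l < n then restrict \<alpha> {..<n} l else 0)"
      using vanish by (auto simp: fun_eq_iff)
    ultimately show "\<alpha> \<in> (\<lambda>g l. if l < n then g l else 0) ` ({..<n} \<rightarrow>\<^sub>E {..r})" by blast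
  qed
  thus ?thesis by (rule finite_subset) (intro finite_imageI finite_PiE; simp)
qed

lemma finite_subset_Delta: "J \<subseteq> Delta n r \<Longrightarrow> finite J"
  by (rule finite_subset[OF _ finite_Delta])

lemma dmin_le: "finite A \<Longrightarrow> \<alpha> \<in> A \<Longrightarrow> dmin A l \<le> \<alpha> l"
  unfolding dmin_def by (auto intro: Min_le)

lemma dmin_attained: "finite A \<Longrightarrow> A \<noteq> {} \<Longrightarrow> \<exists>\<alpha>\<in>A. \<alpha> l = dmin A l"
  using Min_in[of "(\<lambda>\<alpha>. \<alpha> l) ` A"] unfolding dmin_def by fastforce

lemma dmax_attained: "finite A \<Longrightarrow> A \<noteq> {} \<Longrightarrow> \<exists>\<alpha>\<in>A. \<alpha> l = dmax A l"
  using Max_in[of "(\<lambda>\<alpha>. \<alpha> l) ` A"] unfolding dmax_def by fastforce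

lemma bounding_box_mono:
  assumes "finite B" "A \<subseteq> B" "A \<noteq> {}"
  shows "bounding_box A \<subseteq> bounding_box B"
proof -
  have "dmin B l \<le> dmin A l" "dmax A l \<le> dmax B l" for l
    using assms by (auto simp: dmin_def dmax_def intro!: Min_antimono Max_mono)
  thus ?thesis unfolding bounding_box_def le_fun_def by (blast intro: order_trans)
qed

lemma dmax_eq_0: "J \<subseteq> Delta n r \<Longrightarrow> J \<noteq> {} \<Longrightarrow> n \<le> l \<Longrightarrow> dmax J l = 0"
  using dmax_attained[of J l] finite_subset_Delta[of J] by (auto simp: Delta_def)

lemma bounding_box_vanishing:
  "J \<subseteq> Delta n r \<Longrightarrow> J \<noteq> {} \<Longrightarrow> v \<in> bounding_box J \<Longrightarrow> n \<le> l \<Longrightarrow> v l = 0"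
  using dmax_eq_0[of J n r l] by (simp add: bounding_box_def le_fun_def) (metis le_zero_eq)

lemma add_in_bounding_box:
  assumes "dmin K \<le> \<alpha>" "(\<lambda>l. \<alpha> l + u l) \<le> dmax K" "\<And>l. w l \<le> u l"
  shows "(\<lambda>l. \<alpha> l + w l) \<in> bounding_box K"
  unfolding bounding_box_def le_fun_def
proof (intro CollectI conjI allI)
  fix l
  show "dmin K l \<le> \<alpha> l + w l" using le_funD[OF assms(1), of l] by simp
  show "\<alpha> l + w l \<le> dmax K l" using le_funD[OF assms(2), of l] assms(3)[of l] by simp
qed

lemma less_if_pos_below_dmax:
  assumes "J \<subseteq> Delta n r" "J \<noteq> {}" "w \<le> dmax J" "0 < w i"
  shows "i < n"
proof (rule ccontr)
  assume "\<not> i < n"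
  hence "dmax J i = 0" using dmax_eq_0[OF assms(1,2)] by simp
  thus False using le_funD[OF assms(3), of i] assms(4) by simp
qed

section \<open>Transfer of the exchange relations\<close>

definition unit_sum :: "nat set \<Rightarrow> (nat \<Rightarrow> nat) \<Rightarrow> vec" where
  "unit_sum M i = (\<lambda>l. \<Sum>m\<in>M. unitv (i m) l)"

lemma fsum_cong: "(\<And>k. k \<in> K \<Longrightarrow> f k = g k) \<Longrightarrow> fsum K f = fsum K g"
  unfolding fsum_def
  by (cases "finite K") (auto intro!: arg_cong[where f="filter_mset _"] image_mset_cong)

lemma unitv_le_unit_sum: "finite M \<Longrightarrow> k \<in> M \<Longrightarrow> unitv (i k) l \<le> unit_sum M i l"
  unfolding unit_sum_def by (rule member_le_sum) auto

lemma unitv_bij_relabel: "bij p \<Longrightarrow> unitv i (p l) = unitv (inv p i) l"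
  by (auto simp: unitv_def bij_inv_eq_iff)

lemma unit_sum_bij_relabel: "bij p \<Longrightarrow> unit_sum M i (p l) = unit_sum M (inv p \<circ> i) l"
  by (simp add: unit_sum_def unitv_bij_relabel)

lemma is_rep_support: "is_rep N n r J \<rho> \<Longrightarrow> {\<alpha>. \<rho> \<alpha> \<noteq> 0} = J"
  by (simp add: is_rep_def)

lemma is_rep_outside: "is_rep N n r J \<rho> \<Longrightarrow> \<alpha> \<notin> J \<Longrightarrow> \<rho> \<alpha> = 0"
  using is_rep_support by blast

text \<open>The truncated subtraction of \<open>is_rep_def\<close> is regrouped so that it only subtracts
  \<open>unitv (i k)\<close> from \<open>unit_sum {0..s} i\<close>, where no truncation occurs.\<close>
lemma is_rep_iff:
  "is_rep N n r J \<rho> \<longleftrightarrow> {\<alpha>. \<rho> \<alpha> \<noteq> 0} = J \<and>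
     (\<forall>s \<alpha> i j. 2 \<le> s \<longrightarrow> s \<le> r \<longrightarrow> \<alpha> \<in> Delta n (r - s) \<longrightarrow> dmin J \<le> \<alpha> \<longrightarrow>
        (\<forall>k\<in>{0..s}. i k < n) \<longrightarrow> (\<forall>k\<in>{2..s}. j k < n) \<longrightarrow>
        (\<lambda>l. \<alpha> l + (unit_sum {0..s} i l + unit_sum {2..s} j l)) \<le> dmax J \<longrightarrow>
        fsum {0..s} (\<lambda>k.
            \<rho> (\<lambda>l. \<alpha> l + (unit_sum {0..s} i l - unitv (i k) l)) *
            \<rho> (\<lambda>l. \<alpha> l + (unitv (i k) l + unit_sum {2..s} j l))) \<in> N)"
proof -
  have "fsum {0..s} (\<lambda>k.
            \<rho> (\<lambda>l. \<alpha> l + (\<Sum>m=0..s. unitv (i m) l) - unitv (i k) l) *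
            \<rho> (\<lambda>l. \<alpha> l + unitv (i k) l + (\<Sum>m=2..s. unitv (j m) l))) =
        fsum {0..s} (\<lambda>k.
            \<rho> (\<lambda>l. \<alpha> l + (unit_sum {0..s} i l - unitv (i k) l)) *
            \<rho> (\<lambda>l. \<alpha> l + (unitv (i k) l + unit_sum {2..s} j l)))" for s \<alpha> i j
  proof (rule fsum_cong)
    fix k assume "k \<in> {0..s}"
    hence "unitv (i k) l \<le> unit_sum {0..s} i l" for l by (simp add: unitv_le_unit_sum)
    hence "(\<lambda>l. \<alpha> l + (\<Sum>m=0..s. unitv (i m) l) - unitv (i k) l) =
        (\<lambda>l. \<alpha> l + (unit_sum {0..s} i l - unitv (i k) l))"
      by (simp add: unit_sum_def fun_eq_iff)
    moreover have "(\<lambda>l. \<alpha> l + unitv (i k) l + (\<Sum>m=2..s. unitv (j m) l)) =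
        (\<lambda>l. \<alpha> l + (unitv (i k) l + unit_sum {2..s} j l))"
      by (simp add: unit_sum_def add.assoc)
    ultimately show "\<rho> (\<lambda>l. \<alpha> l + (\<Sum>m=0..s. unitv (i m) l) - unitv (i k) l) *
            \<rho> (\<lambda>l. \<alpha> l + unitv (i k) l + (\<Sum>m=2..s. unitv (j m) l)) =
            \<rho> (\<lambda>l. \<alpha> l + (unit_sum {0..s} i l - unitv (i k) l)) *
            \<rho> (\<lambda>l. \<alpha> l + (unitv (i k) l + unit_sum {2..s} j l))"
      by (simp only:)
  qed
  moreover have "(\<lambda>l. \<alpha> l + (\<Sum>m=0..s. unitv (i m) l) + (\<Sum>m=2..s. unitv (j m) l)) =
      (\<lambda>l. \<alpha> l + (unit_sum {0..s} i l + unit_sum {2..s} j l))" for s \<alpha> i j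
    by (simp add: unit_sum_def add.assoc)
  ultimately show ?thesis unfolding is_rep_def by (simp only:)
qed

lemma fsum_pullback_relabel:
  assumes on_box: "\<And>v. v \<in> bounding_box K \<Longrightarrow> \<psi> v = \<rho> (\<phi> v)"
    and additive: "\<And>w. \<phi> (\<lambda>l. \<alpha> l + w l) = (\<lambda>l. \<phi> \<alpha> l + w (p l))" and p: "bij p"
    and \<alpha>: "dmin K \<le> \<alpha>" "(\<lambda>l. \<alpha> l + (unit_sum {0..s} i l + unit_sum {2..s} j l)) \<le> dmax K"
  shows "fsum {0..s} (\<lambda>k.
            \<psi> (\<lambda>l. \<alpha> l + (unit_sum {0..s} i l - unitv (i k) l)) *
            \<psi> (\<lambda>l. \<alpha> l + (unitv (i k) l + unit_sum {2..s} j l))) =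
         fsum {0..s} (\<lambda>k.
            \<rho> (\<lambda>l. \<phi> \<alpha> l + (unit_sum {0..s} (inv p \<circ> i) l - unitv ((inv p \<circ> i) k) l)) *
            \<rho> (\<lambda>l. \<phi> \<alpha> l + (unitv ((inv p \<circ> i) k) l + unit_sum {2..s} (inv p \<circ> j) l)))"
proof (rule fsum_cong)
  fix k assume "k \<in> {0..s}"
  hence "unitv (i k) l \<le> unit_sum {0..s} i l" for l by (simp add: unitv_le_unit_sum)
  hence "(\<lambda>l. \<alpha> l + (unitv (i k) l + unit_sum {2..s} j l)) \<in> bounding_box K"
    by (intro add_in_bounding_box[OF \<alpha>]) (simp add: add_right_mono)
  moreover have "(\<lambda>l. \<alpha> l + (unit_sum {0..s} i l - unitv (i k) l)) \<in> bounding_box K"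
    by (intro add_in_bounding_box[OF \<alpha>]) simp
  ultimately show "\<psi> (\<lambda>l. \<alpha> l + (unit_sum {0..s} i l - unitv (i k) l)) *
      \<psi> (\<lambda>l. \<alpha> l + (unitv (i k) l + unit_sum {2..s} j l)) =
      \<rho> (\<lambda>l. \<phi> \<alpha> l + (unit_sum {0..s} (inv p \<circ> i) l - unitv ((inv p \<circ> i) k) l)) *
      \<rho> (\<lambda>l. \<phi> \<alpha> l + (unitv ((inv p \<circ> i) k) l + unit_sum {2..s} (inv p \<circ> j) l))"
    by (simp add: on_box additive unit_sum_bij_relabel[OF p] unitv_bij_relabel[OF p])
qed

text \<open>Every elementary embedding is an instance: shifts (\<open>p = id\<close>), coordinate permutations,
  and the identity between simplices with different numbers of variables.\<close>
lemma is_rep_pullback: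
  fixes N :: "'a::{comm_monoid_mult, mult_zero} multiset set"
    and \<phi> :: "vec \<Rightarrow> vec" and p :: "nat \<Rightarrow> nat"
  assumes rep: "is_rep N n' r' J \<rho>" and J: "J \<subseteq> Delta n' r'" "J \<noteq> {}"
    and maps: "\<phi> ` K \<subseteq> J"
    and reflects: "\<And>v. v \<in> bounding_box K \<Longrightarrow> \<phi> v \<in> J \<Longrightarrow> v \<in> K"
    and box: "\<And>v. v \<in> bounding_box K \<Longrightarrow> \<phi> v \<in> bounding_box J"
    and additive: "\<And>v w. dmin K \<le> v \<Longrightarrow> \<phi> (\<lambda>l. v l + w l) = (\<lambda>l. \<phi> v l + w (p l))"
    and p: "bij p"
    and degree: "\<And>v k. v \<in> bounding_box K \<Longrightarrow> v \<in> Delta n k \<Longrightarrow>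
        int (\<Sum>l<n'. \<phi> v l) + int r = int k + int r'"
  shows "is_rep N n r K (pullback K \<phi> \<rho>)"
  unfolding is_rep_iff
proof (intro conjI allI impI)
  show "{\<alpha>. pullback K \<phi> \<rho> \<alpha> \<noteq> 0} = K"
    using is_rep_support[OF rep] maps by (auto simp: pullback_def)
next
  fix s \<alpha> and i j :: "nat \<Rightarrow> nat"
  assume s: "2 \<le> s" "s \<le> r" and \<alpha>: "\<alpha> \<in> Delta n (r - s)" "dmin K \<le> \<alpha>"
    and top: "(\<lambda>l. \<alpha> l + (unit_sum {0..s} i l + unit_sum {2..s} j l)) \<le> dmax K"
  define i' j' where "i' = inv p \<circ> i" and "j' = inv p \<circ> j"
  have \<alpha>_box: "\<alpha> \<in> bounding_box K" using add_in_bounding_box[OF \<alpha>(2) top, of "\<lambda>_. 0"] by simp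
  have top_J: "(\<lambda>l. \<phi> \<alpha> l + (unit_sum {0..s} i' l + unit_sum {2..s} j' l)) \<le> dmax J"
    using box[OF add_in_bounding_box[OF \<alpha>(2) top order_refl]] additive[OF \<alpha>(2)]
    by (simp add: bounding_box_def unit_sum_bij_relabel[OF p] i'_def j'_def)
  have "int (\<Sum>l<n'. \<phi> \<alpha> l) + int r = int (r - s) + int r'" using degree[OF \<alpha>_box \<alpha>(1)] .
  hence s_r': "s \<le> r'" and "(\<Sum>l<n'. \<phi> \<alpha> l) = r' - s" using s by linarith+
  moreover have "\<phi> \<alpha> l = 0" if "n' \<le> l" for l
    using bounding_box_vanishing[OF J box[OF \<alpha>_box] that] .
  ultimately have \<phi>\<alpha>: "\<phi> \<alpha> \<in> Delta n' (r' - s)" by (simp add: Delta_def)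
  have "i' k < n'" if "k \<in> {0..s}" for k
    using unitv_le_unit_sum[OF _ that, of i' "i' k"]
    by (intro less_if_pos_below_dmax[OF J top_J]) (simp add: unitv_def)
  moreover have "j' k < n'" if "k \<in> {2..s}" for k
    using unitv_le_unit_sum[OF _ that, of j' "j' k"]
    by (intro less_if_pos_below_dmax[OF J top_J]) (simp add: unitv_def)
  ultimately have relation_J: "fsum {0..s} (\<lambda>k.
        \<rho> (\<lambda>l. \<phi> \<alpha> l + (unit_sum {0..s} i' l - unitv (i' k) l)) *
        \<rho> (\<lambda>l. \<phi> \<alpha> l + (unitv (i' k) l + unit_sum {2..s} j' l))) \<in> N"
    using rep s(1) s_r' \<phi>\<alpha> box[OF \<alpha>_box] top_J unfolding is_rep_iff bounding_box_def by blast
  have on_box: "pullback K \<phi> \<rho> v = \<rho> (\<phi> v)" if "v \<in> bounding_box K" for v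
    using reflects[OF that] is_rep_outside[OF rep] by (auto simp: pullback_def)
  show "fsum {0..s} (\<lambda>k.
        pullback K \<phi> \<rho> (\<lambda>l. \<alpha> l + (unit_sum {0..s} i l - unitv (i k) l)) *
        pullback K \<phi> \<rho> (\<lambda>l. \<alpha> l + (unitv (i k) l + unit_sum {2..s} j l))) \<in> N"
    using relation_J fsum_pullback_relabel[where \<psi> = "pullback K \<phi> \<rho>" and \<rho> = \<rho> and \<phi> = \<phi>,
        OF on_box additive[OF \<alpha>(2)] p \<alpha>(2) top]
    unfolding i'_def j'_def by simp
qed

definition shift :: "(nat \<Rightarrow> int) \<Rightarrow> vec \<Rightarrow> vec" where
  "shift d \<alpha> = (\<lambda>l. nat (int (\<alpha> l) + d l))"

lemma int_shift: "0 \<le> int (\<alpha> l) + d l \<Longrightarrow> int (shift d \<alpha> l) = int (\<alpha> l) + d l"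
  by (simp add: shift_def)

lemma shift_mono: "\<alpha> \<le> \<beta> \<Longrightarrow> shift d \<alpha> \<le> shift d \<beta>"
  by (simp add: shift_def le_fun_def nat_mono)

lemma shift_add:
  "(\<And>l. 0 \<le> int (v l) + d l) \<Longrightarrow> shift d (\<lambda>l. v l + w l) = (\<lambda>l. shift d v l + w l)"
proof
  fix l assume "\<And>l. 0 \<le> int (v l) + d l"
  from this[of l] show "shift d (\<lambda>l. v l + w l) l = shift d v l + w l"
    by (simp add: shift_def nat_add_distrib[symmetric] algebra_simps)
qed

lemma shift_shift_inverse:
  "(\<And>l. 0 \<le> int (\<alpha> l) + d l) \<Longrightarrow> shift (\<lambda>l. - d l) (shift d \<alpha>) = \<alpha>"
  by (simp add: shift_def fun_eq_iff)

lemma shift_shift: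
  "(\<And>l. 0 \<le> int (\<alpha> l) + b l) \<Longrightarrow> shift a (shift b \<alpha>) = shift (\<lambda>l. a l + b l) \<alpha>"
  by (simp add: shift_def fun_eq_iff algebra_simps)

lemma shift_inj:
  "shift d \<alpha> = shift d \<beta> \<Longrightarrow> (\<And>l. 0 \<le> int (\<alpha> l) + d l) \<Longrightarrow> (\<And>l. 0 \<le> int (\<beta> l) + d l)
    \<Longrightarrow> \<alpha> = \<beta>"
  by (metis shift_shift_inverse)

lemma inj_on_shift:
  assumes "finite K" and exact: "\<And>l. 0 \<le> int (dmin K l) + d l"
  shows "inj_on (shift d) K"
proof (rule inj_onI)
  have nonneg: "0 \<le> int (\<alpha> l) + d l" if "\<alpha> \<in> K" for \<alpha> l
    using exact[of l] dmin_le[OF assms(1) that, of l] by linarith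
  fix \<alpha> \<beta> assume "\<alpha> \<in> K" "\<beta> \<in> K" "shift d \<alpha> = shift d \<beta>"
  thus "\<alpha> = \<beta>" using shift_inj[of d \<alpha> \<beta>] nonneg by simp
qed

lemma dmin_shift_image:
  assumes "finite K" "K \<noteq> {}"
  shows "dmin (shift d ` K) = shift d (dmin K)"
proof
  fix l
  have "mono (\<lambda>x::nat. nat (int x + d l))" by (simp add: mono_def nat_mono)
  hence "nat (int (Min ((\<lambda>\<alpha>. \<alpha> l) ` K)) + d l) = Min ((\<lambda>x. nat (int x + d l)) ` (\<lambda>\<alpha>. \<alpha> l) ` K)"
    by (rule mono_Min_commute) (use assms in auto)
  thus "dmin (shift d ` K) l = shift d (dmin K) l" by (simp add: dmin_def shift_def image_image)
qed

lemma dmax_shift_image: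
  assumes "finite K" "K \<noteq> {}"
  shows "dmax (shift d ` K) = shift d (dmax K)"
proof
  fix l
  have "mono (\<lambda>x::nat. nat (int x + d l))" by (simp add: mono_def nat_mono)
  hence "nat (int (Max ((\<lambda>\<alpha>. \<alpha> l) ` K)) + d l) = Max ((\<lambda>x. nat (int x + d l)) ` (\<lambda>\<alpha>. \<alpha> l) ` K)"
    by (rule mono_Max_commute) (use assms in auto)
  thus "dmax (shift d ` K) l = shift d (dmax K) l" by (simp add: dmax_def shift_def image_image)
qed

lemma shift_in_bounding_box:
  "finite K \<Longrightarrow> K \<noteq> {} \<Longrightarrow> v \<in> bounding_box K \<Longrightarrow> shift d v \<in> bounding_box (shift d ` K)"
  by (simp add: bounding_box_def dmin_shift_image dmax_shift_image shift_mono)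

lemma int_sum_shift:
  "(\<And>l. 0 \<le> int (v l) + d l) \<Longrightarrow> int (\<Sum>l<n. shift d v l) = int (\<Sum>l<n. v l) + (\<Sum>l<n. d l)"
  by (simp add: of_nat_sum int_shift sum.distrib)

text \<open>\<open>exact\<close> says that \<open>shift d\<close> truncates nothing on the bounding box of \<open>K\<close>.\<close>
lemma is_rep_pullback_shift:
  fixes N :: "'a::{comm_monoid_mult, mult_zero} multiset set"
  assumes rep: "is_rep N n r' J \<rho>" and J: "J \<subseteq> Delta n r'" and K: "K \<subseteq> Delta n r" "K \<noteq> {}"
    and exact: "\<And>l. 0 \<le> int (dmin K l) + d l"
    and maps: "shift d ` K \<subseteq> J" and onto_section: "J \<inter> bounding_box (shift d ` K) \<subseteq> shift d ` K"
  shows "is_rep N n r K (pullback K (shift d) \<rho>)"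
proof -
  have "finite K" "finite J" using K J finite_subset_Delta by auto
  have nonneg: "0 \<le> int (v l) + d l" if "dmin K \<le> v" for v l
    using exact[of l] le_funD[OF that, of l] by linarith
  obtain \<alpha>\<^sub>0 where "\<alpha>\<^sub>0 \<in> K" using K by blast
  have "shift d \<alpha>\<^sub>0 \<in> Delta n r'" using maps J \<open>\<alpha>\<^sub>0 \<in> K\<close> by blast
  hence "int r' = int (\<Sum>l<n. shift d \<alpha>\<^sub>0 l)" by (simp add: Delta_def)
  also have "\<dots> = int (\<Sum>l<n. \<alpha>\<^sub>0 l) + (\<Sum>l<n. d l)"
    using dmin_le[OF \<open>finite K\<close> \<open>\<alpha>\<^sub>0 \<in> K\<close>] by (intro int_sum_shift nonneg le_funI)
  also have "(\<Sum>l<n. \<alpha>\<^sub>0 l) = r" using K \<open>\<alpha>\<^sub>0 \<in> K\<close> by (auto simp: Delta_def)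
  finally have sum_d: "(\<Sum>l<n. d l) = int r' - int r" by simp
  show ?thesis
  proof (rule is_rep_pullback[OF rep J _ maps _ _ _ bij_id])
    show "J \<noteq> {}" using maps K by blast
  next
    fix v assume v: "v \<in> bounding_box K" and "shift d v \<in> J"
    with onto_section shift_in_bounding_box[OF \<open>finite K\<close> K(2) v]
    obtain \<alpha> where "\<alpha> \<in> K" "shift d v = shift d \<alpha>" by blast
    moreover have "dmin K \<le> v" using v by (simp add: bounding_box_def)
    ultimately show "v \<in> K"
      using shift_inj nonneg dmin_le[OF \<open>finite K\<close>] by (metis le_funI)
  next
    fix v assume "v \<in> bounding_box K"
    thus "shift d v \<in> bounding_box J"
      using shift_in_bounding_box[OF \<open>finite K\<close> K(2)] bounding_box_mono[OF \<open>finite J\<close> maps] K(2)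
      by blast
  next
    fix v w :: vec assume "dmin K \<le> v"
    thus "shift d (\<lambda>l. v l + w l) = (\<lambda>l. shift d v l + w (id l))"
      using shift_add[OF nonneg] by simp
  next
    fix v k assume "v \<in> bounding_box K" "v \<in> Delta n k"
    hence "int (\<Sum>l<n. shift d v l) = int k + (\<Sum>l<n. d l)"
      by (subst int_sum_shift) (auto simp: bounding_box_def Delta_def intro: nonneg)
    thus "int (\<Sum>l<n. shift d v l) + int r = int k + int r'" using sum_d by simp
  qed
qed

lemma pullback_shift_surj:
  fixes N :: "'a::{comm_monoid_mult, mult_zero} multiset set"
  assumes rep: "is_rep N n r K \<pi>" and K: "K \<subseteq> Delta n r" and J: "J \<subseteq> Delta n r'" "J \<noteq> {}"
    and onto: "shift d ` K = J" and exact: "\<And>l. 0 \<le> int (dmin K l) + d l"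
  shows "\<exists>\<rho>. is_rep N n r' J \<rho> \<and> pullback K (shift d) \<rho> = \<pi>"
proof -
  have "finite K" using K by (rule finite_subset_Delta)
  have "K \<noteq> {}" using J onto by blast
  have inverse: "shift (\<lambda>l. - d l) (shift d \<alpha>) = \<alpha>" if "\<alpha> \<in> K" for \<alpha>
  proof (rule shift_shift_inverse)
    fix l show "0 \<le> int (\<alpha> l) + d l" using exact[of l] dmin_le[OF \<open>finite K\<close> that, of l] by linarith
  qed
  hence shift_back: "shift (\<lambda>l. - d l) ` J = K" unfolding onto[symmetric] image_image by simp
  have "dmin J = shift d (dmin K)"
    unfolding onto[symmetric] by (rule dmin_shift_image[OF \<open>finite K\<close> \<open>K \<noteq> {}\<close>])
  hence "int (dmin J l) = int (dmin K l) + d l" for l using exact[of l] by (simp add: int_shift)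
  hence "is_rep N n r' J (pullback J (shift (\<lambda>l. - d l)) \<pi>)"
    by (intro is_rep_pullback_shift[OF rep K J]) (simp_all add: shift_back)
  moreover have "pullback K (shift d) (pullback J (shift (\<lambda>l. - d l)) \<pi>) = \<pi>"
  proof
    fix \<alpha>
    show "pullback K (shift d) (pullback J (shift (\<lambda>l. - d l)) \<pi>) \<alpha> = \<pi> \<alpha>"
    proof (cases "\<alpha> \<in> K")
      case True
      hence "shift d \<alpha> \<in> J" using onto by blast
      thus ?thesis using True inverse by (simp add: pullback_def)
    next
      case False
      thus ?thesis using is_rep_outside[OF rep False] by (simp add: pullback_def)
    qed
  qed
  ultimately show ?thesis by blast
qed

lemma dmin_comp_image: "dmin ((\<lambda>\<alpha>. \<alpha> \<circ> f) ` K) = dmin K \<circ> f"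
  by (simp add: dmin_def image_image fun_eq_iff)

lemma dmax_comp_image: "dmax ((\<lambda>\<alpha>. \<alpha> \<circ> f) ` K) = dmax K \<circ> f"
  by (simp add: dmax_def image_image fun_eq_iff)

lemma comp_permutes_Delta:
  assumes "\<sigma> permutes {..<n}" "\<alpha> \<in> Delta n r"
  shows "\<alpha> \<circ> \<sigma> \<in> Delta n r"
proof -
  have "(\<alpha> \<circ> \<sigma>) l = 0" if "n \<le> l" for l
    using assms that permutes_not_in[OF assms(1), of l] by (simp add: Delta_def)
  moreover have "(\<Sum>l<n. (\<alpha> \<circ> \<sigma>) l) = r"
    using assms sum.permute[OF assms(1), of \<alpha>] by (simp add: Delta_def)
  ultimately show ?thesis by (simp add: Delta_def)
qed

lemma is_rep_pullback_permute:
  fixes N :: "'a::{comm_monoid_mult, mult_zero} multiset set"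
  assumes rep: "is_rep N n r J \<rho>" and \<sigma>: "\<sigma> permutes {..<n}"
    and K: "K \<subseteq> Delta n r" "K \<noteq> {}" and J: "J = (\<lambda>\<alpha>. \<alpha> \<circ> \<sigma>) ` K"
  shows "is_rep N n r K (pullback K (\<lambda>\<alpha>. \<alpha> \<circ> \<sigma>) \<rho>)"
proof (rule is_rep_pullback[OF rep])
  show "J \<subseteq> Delta n r" "J \<noteq> {}" "(\<lambda>\<alpha>. \<alpha> \<circ> \<sigma>) ` K \<subseteq> J"
    using J K comp_permutes_Delta[OF \<sigma>] by auto
  show "bij \<sigma>" using permutes_bij[OF \<sigma>] .
  show "(\<lambda>l. v l + w l) \<circ> \<sigma> = (\<lambda>l. (v \<circ> \<sigma>) l + w (\<sigma> l))" for v w :: vec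
    by (simp add: fun_eq_iff)
  have cancel: "v \<circ> \<sigma> \<circ> inv \<sigma> = v" for v :: vec
    by (simp add: comp_assoc permutes_inv_o[OF \<sigma>])
  fix v assume v: "v \<in> bounding_box K"
  show "v \<in> K" if vJ: "v \<circ> \<sigma> \<in> J"
  proof -
    obtain \<alpha> where "\<alpha> \<in> K" and eq: "v \<circ> \<sigma> = \<alpha> \<circ> \<sigma>" using vJ J by blast
    have "v = v \<circ> \<sigma> \<circ> inv \<sigma>" by (rule cancel[symmetric])
    also have "\<dots> = \<alpha>" unfolding eq by (rule cancel)
    finally show ?thesis using \<open>\<alpha> \<in> K\<close> by simp
  qed
  show "v \<circ> \<sigma> \<in> bounding_box J"
    using v by (simp add: J bounding_box_def dmin_comp_image dmax_comp_image le_fun_def)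
  fix k assume "v \<in> Delta n k"
  thus "int (\<Sum>l<n. (v \<circ> \<sigma>) l) + int r = int k + int r"
    using sum.permute[OF \<sigma>, of v] by (simp add: Delta_def)
qed

lemma sum_lessThan_vanishing_eq:
  fixes v :: "nat \<Rightarrow> nat"
  assumes "\<forall>l\<ge>n. v l = 0" "\<forall>l\<ge>n'. v l = 0"
  shows "(\<Sum>l<n. v l) = (\<Sum>l<n'. v l)"
proof -
  have "(\<Sum>l<n. v l) = (\<Sum>l<max n n'. v l)"
    using assms(1) by (intro sum.mono_neutral_left) auto
  moreover have "(\<Sum>l<n'. v l) = (\<Sum>l<max n n'. v l)"
    using assms(2) by (intro sum.mono_neutral_left) auto
  ultimately show ?thesis by simp
qed

lemma pullback_id: "{\<alpha>. \<rho> \<alpha> \<noteq> 0} = J \<Longrightarrow> pullback J id \<rho> = \<rho>"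
  by (auto simp: pullback_def fun_eq_iff)

lemma is_rep_change_ambient:
  fixes N :: "'a::{comm_monoid_mult, mult_zero} multiset set"
  assumes rep: "is_rep N n' r J \<rho>" and J: "J \<subseteq> Delta n r" "J \<subseteq> Delta n' r" "J \<noteq> {}"
  shows "is_rep N n r J \<rho>"
proof -
  have "is_rep N n r J (pullback J id \<rho>)"
  proof (rule is_rep_pullback[OF rep J(2,3) _ _ _ _ bij_id])
    show "id ` J \<subseteq> J" "\<And>v. id v \<in> J \<Longrightarrow> v \<in> J" "\<And>v. v \<in> bounding_box J \<Longrightarrow> id v \<in> bounding_box J"
      "\<And>v w. id (\<lambda>l. v l + w l) = (\<lambda>l. id v l + w (id l))"
      by simp_all
  next
    fix v k assume v: "v \<in> bounding_box J" "v \<in> Delta n k"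
    have "v l = 0" if "n' \<le> l" for l
      using bounding_box_vanishing[OF J(2,3) v(1) that] .
    hence "(\<Sum>l<n'. v l) = (\<Sum>l<n. v l)"
      using v(2) by (intro sum_lessThan_vanishing_eq) (auto simp: Delta_def)
    thus "int (\<Sum>l<n'. id v l) + int r = int k + int r"
      using v(2) by (simp add: Delta_def)
  qed
  thus ?thesis by (simp only: pullback_id[OF is_rep_support[OF rep]])
qed

section \<open>Embedded minors\<close>

text \<open>The image of the minor embedding of \<open>J \ \<nu> / \<mu> + \<tau>\<close> in \<open>J\<close>.\<close>
definition minor_image :: "vec set \<Rightarrow> vec \<Rightarrow> vec \<Rightarrow> vec set" where
  "minor_image J \<nu> \<mu> = {\<beta> \<in> deletion J \<nu>. (\<lambda>l. dmin (deletion J \<nu>) l + \<mu> l) \<le> \<beta>}"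

lemma minor_image_subset: "minor_image J \<nu> \<mu> \<subseteq> J"
  by (auto simp: minor_image_def deletion_def)

lemma contraction_eq_shift_image:
  "contraction D \<mu> = shift (\<lambda>l. - int (\<mu> l)) ` {\<beta> \<in> D. (\<lambda>l. dmin D l + \<mu> l) \<le> \<beta>}"
proof -
  have "shift (\<lambda>l. - int (\<mu> l)) \<beta> = (\<lambda>l. \<beta> l - \<mu> l)" if "(\<lambda>l. dmin D l + \<mu> l) \<le> \<beta>" for \<beta>
    using le_funD[OF that] by (force simp: shift_def)
  thus ?thesis unfolding contraction_def by (auto intro!: image_eqI)
qed

lemma emb_minor_eq_shift_image:
  "emb_minor J \<nu> \<mu> \<tau> = shift (\<lambda>l. - (int (\<mu> l) - \<tau> l)) ` minor_image J \<nu> \<mu>"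
proof -
  have "shift \<tau> (shift (\<lambda>l. - int (\<mu> l)) \<beta>) = shift (\<lambda>l. - (int (\<mu> l) - \<tau> l)) \<beta>"
    if "\<beta> \<in> minor_image J \<nu> \<mu>" for \<beta>
  proof -
    have "\<mu> l \<le> \<beta> l" for l
      using that le_funD[of _ \<beta> l] by (fastforce simp: minor_image_def)
    hence "shift \<tau> (shift (\<lambda>l. - int (\<mu> l)) \<beta>) = shift (\<lambda>l. \<tau> l + - int (\<mu> l)) \<beta>"
      by (intro shift_shift) simp
    thus ?thesis by (simp add: algebra_simps)
  qed
  thus ?thesis
    unfolding emb_minor_def translate_def contraction_eq_shift_image image_image minor_image_def[symmetric]
    by (simp add: shift_def[symmetric])
qed

lemma minor_image_exact:
  assumes "finite J" and \<tau>: "\<forall>l. - int (dmin (contraction (deletion J \<nu>) \<mu>) l) \<le> \<tau> l"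
    and \<beta>: "\<beta> \<in> minor_image J \<nu> \<mu>"
  shows "0 \<le> int (\<beta> l) - (int (\<mu> l) - \<tau> l)"
proof -
  let ?D = "deletion J \<nu>"
  have "\<mu> l \<le> \<beta> l" using \<beta> le_funD[of _ \<beta> l] by (fastforce simp: minor_image_def)
  have "(\<lambda>l. \<beta> l - \<mu> l) \<in> contraction ?D \<mu>"
    using \<beta> unfolding minor_image_def contraction_def by blast
  moreover have "finite (contraction ?D \<mu>)"
    using \<open>finite J\<close> by (simp add: contraction_eq_shift_image deletion_def)
  ultimately have "dmin (contraction ?D \<mu>) l \<le> \<beta> l - \<mu> l" using dmin_le by fastforce
  thus ?thesis using \<tau> \<open>\<mu> l \<le> \<beta> l\<close> by (smt (verit) of_nat_diff of_nat_mono)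
qed

lemma minor_image_box_section:
  assumes "finite J" "minor_image J \<nu> \<mu> \<noteq> {}"
  shows "J \<inter> bounding_box (minor_image J \<nu> \<mu>) \<subseteq> minor_image J \<nu> \<mu>"
proof
  let ?L = "minor_image J \<nu> \<mu>" and ?D = "deletion J \<nu>"
  have "finite ?L" by (rule finite_subset[OF minor_image_subset assms(1)])
  fix \<beta> assume "\<beta> \<in> J \<inter> bounding_box ?L"
  hence \<beta>: "\<beta> \<in> J" "dmin ?L \<le> \<beta>" "\<beta> \<le> dmax ?L" by (auto simp: bounding_box_def)
  have "\<beta> l \<le> dmax J l - \<nu> l" for l
  proof -
    obtain \<gamma> where \<gamma>: "\<gamma> \<in> ?L" "\<gamma> l = dmax ?L l"
      using dmax_attained[OF \<open>finite ?L\<close> assms(2)] by blast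
    have "\<gamma> l \<le> dmax J l - \<nu> l" using \<gamma>(1) by (simp add: minor_image_def deletion_def le_fun_def)
    thus ?thesis using le_funD[OF \<beta>(3), of l] \<gamma>(2) by simp
  qed
  moreover have "dmin ?D l + \<mu> l \<le> \<beta> l" for l
  proof -
    obtain \<gamma> where \<gamma>: "\<gamma> \<in> ?L" "\<gamma> l = dmin ?L l"
      using dmin_attained[OF \<open>finite ?L\<close> assms(2)] by blast
    have "dmin ?D l + \<mu> l \<le> \<gamma> l" using \<gamma>(1) by (simp add: minor_image_def le_fun_def)
    thus ?thesis using le_funD[OF \<beta>(2), of l] \<gamma>(2) by simp
  qed
  ultimately show "\<beta> \<in> ?L" using \<beta>(1) by (simp add: minor_image_def deletion_def le_fun_def)
qed

text \<open>The minor embedding is the shift by \<open>d = \<mu> - \<tau>\<close>; the hypothesis on \<open>\<tau>\<close> makes it exact.\<close>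
lemma emb_minor_shift:
  assumes "finite J" "emb_minor J \<nu> \<mu> \<tau> \<noteq> {}"
    and \<tau>: "\<forall>l. - int (dmin (contraction (deletion J \<nu>) \<mu>) l) \<le> \<tau> l"
  defines "d \<equiv> \<lambda>l. int (\<mu> l) - \<tau> l"
  shows "shift d ` emb_minor J \<nu> \<mu> \<tau> = minor_image J \<nu> \<mu>"
    and "\<And>l. 0 \<le> int (dmin (emb_minor J \<nu> \<mu> \<tau>) l) + d l"
proof -
  let ?L = "minor_image J \<nu> \<mu>"
  have K: "emb_minor J \<nu> \<mu> \<tau> = shift (\<lambda>l. - d l) ` ?L"
    unfolding d_def by (rule emb_minor_eq_shift_image)
  have "finite ?L" by (rule finite_subset[OF minor_image_subset assms(1)])
  have "?L \<noteq> {}" using assms(2) unfolding K by simp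
  have exact: "0 \<le> int (\<beta> l) + - d l" if "\<beta> \<in> ?L" for \<beta> l
    using minor_image_exact[OF assms(1) \<tau> that, of l] unfolding d_def by linarith
  have "shift (\<lambda>l. - (- d l)) (shift (\<lambda>l. - d l) \<beta>) = \<beta>" if "\<beta> \<in> ?L" for \<beta>
    by (rule shift_shift_inverse) (rule exact[OF that])
  hence "(\<lambda>\<beta>. shift d (shift (\<lambda>l. - d l) \<beta>)) ` ?L = ?L" by (simp cong: image_cong)
  thus "shift d ` emb_minor J \<nu> \<mu> \<tau> = ?L" unfolding K image_image .
  fix l
  obtain \<beta> where \<beta>: "\<beta> \<in> ?L" "\<beta> l = dmin ?L l"
    using dmin_attained[OF \<open>finite ?L\<close> \<open>?L \<noteq> {}\<close>] by blast
  have "dmin (emb_minor J \<nu> \<mu> \<tau>) = shift (\<lambda>l. - d l) (dmin ?L)"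
    unfolding K by (rule dmin_shift_image[OF \<open>finite ?L\<close> \<open>?L \<noteq> {}\<close>])
  hence "int (dmin (emb_minor J \<nu> \<mu> \<tau>) l) = int (\<beta> l) + - d l"
    using int_shift[of "dmin ?L" l "\<lambda>l. - d l"] exact[OF \<beta>(1), of l] \<beta>(2) by simp
  thus "0 \<le> int (dmin (emb_minor J \<nu> \<mu> \<tau>) l) + d l" by simp
qed

lemma minor_map_eq_shift: "(\<lambda>\<alpha> l. nat (int (\<alpha> l) + int (\<mu> l) - \<tau> l)) = shift (\<lambda>l. int (\<mu> l) - \<tau> l)"
  by (simp add: shift_def fun_eq_iff add_diff_eq)

lemma M_convex_Delta: "M_convex n r J \<Longrightarrow> J \<subseteq> Delta n r"
  by (simp add: M_convex_def)

lemma M_convex_nonempty: "M_convex n r J \<Longrightarrow> J \<noteq> {}"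
  by (simp add: M_convex_def)

lemma M_convex_finite: "M_convex n r J \<Longrightarrow> finite J"
  by (rule finite_subset_Delta[OF M_convex_Delta])

lemma elem_emb_inj_on: "elem_emb n r J n' r' J' f \<Longrightarrow> f ` J \<subseteq> J' \<and> inj_on f J"
proof (induction rule: elem_emb.induct)
  case (minor n r' J' r \<nu> \<mu> \<tau>)
  note shift = emb_minor_shift[OF M_convex_finite[OF minor(1)] M_convex_nonempty[OF minor(2)] minor(8)]
  have "inj_on (shift (\<lambda>l. int (\<mu> l) - \<tau> l)) (emb_minor J' \<nu> \<mu> \<tau>)"
    by (rule inj_on_shift[OF M_convex_finite[OF minor(2)] shift(2)])
  thus ?case unfolding minor_map_eq_shift shift(1) using minor_image_subset by simp
next
  case (perm \<sigma> n r J)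
  have "inj (\<lambda>\<alpha>::vec. \<alpha> \<circ> inv \<sigma>)"
    using permutes_surj[OF permutes_inv[OF perm(1)]] by (simp add: inj_on_def surj_fun_eq)
  hence "inj_on (\<lambda>\<alpha>::vec. \<alpha> \<circ> inv \<sigma>) J" by (rule inj_on_subset) simp
  thus ?case by blast
qed simp_all

lemma is_rep_pullback_elem_emb:
  fixes N :: "'a::{comm_monoid_mult, mult_zero} multiset set"
  assumes "elem_emb n r J n' r' J' f" and "is_rep N n' r' J' \<rho>"
  shows "is_rep N n r J (pullback J f \<rho>)"
  using assms
proof (induction rule: elem_emb.induct)
  case (minor n r' J' r \<nu> \<mu> \<tau>)
  let ?K = "emb_minor J' \<nu> \<mu> \<tau>" and ?L = "minor_image J' \<nu> \<mu>"
  note shift = emb_minor_shift[OF M_convex_finite[OF minor(1)] M_convex_nonempty[OF minor(2)] minor(8)]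
  have "?L \<noteq> {}" using M_convex_nonempty[OF minor(2)] unfolding shift(1)[symmetric] by simp
  show ?case unfolding minor_map_eq_shift
  proof (rule is_rep_pullback_shift[OF minor(9) M_convex_Delta[OF minor(1)] M_convex_Delta[OF minor(2)]
        M_convex_nonempty[OF minor(2)] shift(2)])
    show "shift (\<lambda>l. int (\<mu> l) - \<tau> l) ` ?K \<subseteq> J'" using shift(1) minor_image_subset by simp
    show "J' \<inter> bounding_box (shift (\<lambda>l. int (\<mu> l) - \<tau> l) ` ?K) \<subseteq> shift (\<lambda>l. int (\<mu> l) - \<tau> l) ` ?K"
      using shift(1) minor_image_box_section[OF M_convex_finite[OF minor(1)] \<open>?L \<noteq> {}\<close>] by simp
  qed
next
  case (perm \<sigma> n r J)
  show ?case
    by (rule is_rep_pullback_permute[OF perm(4) permutes_inv[OF perm(1)]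
          M_convex_Delta[OF perm(2)] M_convex_nonempty[OF perm(2)] refl])
next
  case (extension n r J)
  have "is_rep N n r J \<rho>"
    by (rule is_rep_change_ambient[OF extension(3) M_convex_Delta[OF extension(1)]
          M_convex_Delta[OF extension(2)] M_convex_nonempty[OF extension(1)]])
  thus ?case by (simp only: pullback_id[OF is_rep_support[OF extension(3)]])
next
  case (restriction n r J)
  have "is_rep N (Suc n) r J \<rho>"
    by (rule is_rep_change_ambient[OF restriction(3) M_convex_Delta[OF restriction(2)]
          M_convex_Delta[OF restriction(1)] M_convex_nonempty[OF restriction(1)]])
  thus ?case by (simp only: pullback_id[OF is_rep_support[OF restriction(3)]])
qed

lemma elem_emb_pullback_surj:
  fixes N :: "'a::{comm_monoid_mult, mult_zero} multiset set"
  assumes "elem_emb n r J n' r' J' f" and "f ` J = J'" and "is_rep N n r J \<pi>"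
  shows "\<exists>\<rho>. is_rep N n' r' J' \<rho> \<and> pullback J f \<rho> = \<pi>"
  using assms
proof (induction rule: elem_emb.induct)
  case (minor n r' J' r \<nu> \<mu> \<tau>)
  note shift = emb_minor_shift[OF M_convex_finite[OF minor(1)] M_convex_nonempty[OF minor(2)] minor(8)]
  show ?case unfolding minor_map_eq_shift
    by (rule pullback_shift_surj[OF minor(10) M_convex_Delta[OF minor(2)] M_convex_Delta[OF minor(1)]
          M_convex_nonempty[OF minor(1)] minor(9)[unfolded minor_map_eq_shift] shift(2)])
next
  case (perm \<sigma> n r J)
  let ?J' = "(\<lambda>\<alpha>. \<alpha> \<circ> inv \<sigma>) ` J"
  have cancel: "\<alpha> \<circ> inv \<sigma> \<circ> \<sigma> = \<alpha>" for \<alpha> :: vec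
    by (simp add: comp_assoc permutes_inv_o[OF perm(1)])
  hence "J = (\<lambda>\<alpha>. \<alpha> \<circ> \<sigma>) ` ?J'" by (simp add: image_image)
  hence "is_rep N n r ?J' (pullback ?J' (\<lambda>\<alpha>. \<alpha> \<circ> \<sigma>) \<pi>)"
    by (rule is_rep_pullback_permute[OF perm(5) perm(1) M_convex_Delta[OF perm(3)]
          M_convex_nonempty[OF perm(3)]])
  moreover have "pullback J (\<lambda>\<alpha>. \<alpha> \<circ> inv \<sigma>) (pullback ?J' (\<lambda>\<alpha>. \<alpha> \<circ> \<sigma>) \<pi>) = \<pi>"
  proof
    fix \<alpha>
    show "pullback J (\<lambda>\<alpha>. \<alpha> \<circ> inv \<sigma>) (pullback ?J' (\<lambda>\<alpha>. \<alpha> \<circ> \<sigma>) \<pi>) \<alpha> = \<pi> \<alpha>"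
      using is_rep_outside[OF perm(5), of \<alpha>] by (cases "\<alpha> \<in> J") (simp_all add: pullback_def cancel)
  qed
  ultimately show ?case by blast
next
  case (extension n r J)
  have "is_rep N (Suc n) r J \<pi>"
    by (rule is_rep_change_ambient[OF extension(4) M_convex_Delta[OF extension(2)]
          M_convex_Delta[OF extension(1)] M_convex_nonempty[OF extension(1)]])
  thus ?case using pullback_id[OF is_rep_support[OF extension(4)]] by blast
next
  case (restriction n r J)
  have "is_rep N n r J \<pi>"
    by (rule is_rep_change_ambient[OF restriction(4) M_convex_Delta[OF restriction(1)]
          M_convex_Delta[OF restriction(2)] M_convex_nonempty[OF restriction(1)]])
  thus ?case using pullback_id[OF is_rep_support[OF restriction(4)]] by blast
qed

lemma poly_emb_inj_on: "poly_emb n r J n' r' J' f \<Longrightarrow> f ` J \<subseteq> J' \<and> inj_on f J"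
proof (induction rule: poly_emb.induct)
  case (comp n r J n1 r1 J1 f n' r' J' g)
  have f: "f ` J \<subseteq> J1" "inj_on f J" using comp.IH by blast+
  have g: "g ` J1 \<subseteq> J'" "inj_on g J1" using elem_emb_inj_on[OF comp(2)] by blast+
  have "inj_on (g \<circ> f) J" by (rule comp_inj_on[OF f(2) inj_on_subset[OF g(2) f(1)]])
  moreover have "(g \<circ> f) ` J \<subseteq> J'" using f(1) g(1) by auto
  ultimately show ?case by blast
qed (rule elem_emb_inj_on)

lemma pullback_comp: "f ` J \<subseteq> J\<^sub>1 \<Longrightarrow> pullback J (g \<circ> f) \<rho> = pullback J f (pullback J\<^sub>1 g \<rho>)"
  by (auto simp: pullback_def fun_eq_iff)

lemma is_rep_pullback_poly_emb:
  fixes N :: "'a::{comm_monoid_mult, mult_zero} multiset set"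
  assumes "poly_emb n r J n' r' J' f" and "is_rep N n' r' J' \<rho>"
  shows "is_rep N n r J (pullback J f \<rho>)"
  using assms
proof (induction arbitrary: \<rho> rule: poly_emb.induct)
  case (comp n r J n1 r1 J1 f n' r' J' g)
  have "is_rep N n r J (pullback J f (pullback J1 g \<rho>))"
    using comp.IH is_rep_pullback_elem_emb[OF comp(2) comp(4)] .
  thus ?case using pullback_comp poly_emb_inj_on[OF comp(1)] by metis
qed (rule is_rep_pullback_elem_emb)

text \<open>Only surjectivity of \<open>\<iota>\<close> is assumed; injectivity of the elementary steps makes every
  intermediate step surjective as well.\<close>
lemma poly_emb_pullback_surj:
  fixes N :: "'a::{comm_monoid_mult, mult_zero} multiset set"
  assumes "poly_emb n r J n' r' J' f" and "f ` J = J'" and "is_rep N n r J \<pi>"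
  shows "\<exists>\<rho>. is_rep N n' r' J' \<rho> \<and> pullback J f \<rho> = \<pi>"
  using assms
proof (induction arbitrary: \<pi> rule: poly_emb.induct)
  case (comp n r J n1 r1 J1 f n' r' J' g)
  have f: "f ` J \<subseteq> J1" using poly_emb_inj_on[OF comp(1)] by blast
  have g: "g ` J1 \<subseteq> J'" "inj_on g J1" using elem_emb_inj_on[OF comp(2)] by blast+
  have "J1 \<subseteq> f ` J"
  proof
    fix \<beta> assume "\<beta> \<in> J1"
    then obtain \<alpha> where "\<alpha> \<in> J" "g \<beta> = g (f \<alpha>)" using g(1) comp(4) by force
    thus "\<beta> \<in> f ` J" using inj_onD[OF g(2)] f \<open>\<beta> \<in> J1\<close> by blast
  qed
  hence "f ` J = J1" using f by blast
  moreover have "g ` J1 = J'"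
    unfolding \<open>f ` J = J1\<close>[symmetric] image_comp by (rule comp(4))
  ultimately obtain \<rho>\<^sub>1 \<rho> where "is_rep N n1 r1 J1 \<rho>\<^sub>1" "pullback J f \<rho>\<^sub>1 = \<pi>"
    and "is_rep N n' r' J' \<rho>" "pullback J1 g \<rho> = \<rho>\<^sub>1"
    using comp.IH comp(5) elem_emb_pullback_surj[OF comp(2)] by metis
  thus ?case using pullback_comp[OF f] by metis
qed (rule elem_emb_pullback_surj)

section \<open>Grassmannians\<close>

lemma quotient_map_class:
  assumes R: "equiv A R" and S: "equiv B S"
    and respects: "\<And>x y. (x, y) \<in> R \<Longrightarrow> (f x, f y) \<in> S" and "x \<in> A"
  shows "S `` {f (SOME y. y \<in> R `` {x})} = S `` {f x}"
proof -
  have "x \<in> R `` {x}" by (rule equiv_class_self[OF R \<open>x \<in> A\<close>])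
  hence "(SOME y. y \<in> R `` {x}) \<in> R `` {x}" by (rule someI)
  hence "(f x, f (SOME y. y \<in> R `` {x})) \<in> S" by (simp add: respects)
  thus ?thesis by (rule equiv_class_eq[OF S, symmetric])
qed

lemma quotient_map_funcset:
  assumes R: "equiv A R" and S: "equiv B S"
    and respects: "\<And>x y. (x, y) \<in> R \<Longrightarrow> (f x, f y) \<in> S" and maps: "f ` A \<subseteq> B"
  shows "(\<lambda>C. S `` {f (SOME x. x \<in> C)}) \<in> A // R \<rightarrow> B // S"
proof
  fix C assume "C \<in> A // R"
  then obtain x where x: "x \<in> A" "C = R `` {x}" by (rule quotientE)
  have "S `` {f (SOME y. y \<in> R `` {x})} = S `` {f x}"
    by (rule quotient_map_class[where f = f, OF R S respects x(1)])
  moreover have "S `` {f x} \<in> B // S" using x(1) maps by (auto intro: quotientI)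
  ultimately show "S `` {f (SOME x. x \<in> C)} \<in> B // S" by (simp only: x(2))
qed

lemma bij_betw_quotient_map:
  assumes R: "equiv A R" and S: "equiv B S"
    and respects: "\<And>x y. (x, y) \<in> R \<Longrightarrow> (f x, f y) \<in> S"
    and reflects: "\<And>x y. x \<in> A \<Longrightarrow> y \<in> A \<Longrightarrow> (f x, f y) \<in> S \<Longrightarrow> (x, y) \<in> R"
    and maps: "f ` A \<subseteq> B" and onto: "B \<subseteq> f ` A"
  shows "bij_betw (\<lambda>C. S `` {f (SOME x. x \<in> C)}) (A // R) (B // S)"
proof (rule bij_betwI')
  have class_eq: "S `` {f (SOME y. y \<in> R `` {x})} = S `` {f x}" if "x \<in> A" for x
    by (rule quotient_map_class[where f = f, OF R S respects that])
  fix C assume "C \<in> A // R"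
  thus "S `` {f (SOME x. x \<in> C)} \<in> B // S" using quotient_map_funcset[OF R S respects maps] by blast
  fix D assume "D \<in> A // R"
  obtain x y where xy: "x \<in> A" "C = R `` {x}" "y \<in> A" "D = R `` {y}"
    using \<open>C \<in> A // R\<close> \<open>D \<in> A // R\<close> by (metis quotientE)
  have "S `` {f x} = S `` {f y} \<longleftrightarrow> (f x, f y) \<in> S"
    using xy maps by (intro eq_equiv_class_iff[OF S]) auto
  also have "\<dots> \<longleftrightarrow> (x, y) \<in> R" using xy respects reflects by blast
  also have "\<dots> \<longleftrightarrow> C = D" unfolding xy by (rule eq_equiv_class_iff[OF R xy(1,3), symmetric])
  finally show "(S `` {f (SOME x. x \<in> C)} = S `` {f (SOME x. x \<in> D)}) = (C = D)"
    unfolding xy(2,4) class_eq[OF xy(1)] class_eq[OF xy(3)] .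
next
  fix E assume "E \<in> B // S"
  then obtain z where "z \<in> B" "E = S `` {z}" by (rule quotientE)
  then obtain x where "x \<in> A" "E = S `` {f x}" using onto by blast
  moreover have "S `` {f (SOME y. y \<in> R `` {x})} = S `` {f x}"
    by (rule quotient_map_class[where f = f, OF R S respects \<open>x \<in> A\<close>])
  ultimately show "\<exists>C\<in>A // R. E = S `` {f (SOME x. x \<in> C)}" by (metis quotientI)
qed

lemma rep_rel_iff:
  "(\<rho>, \<sigma>) \<in> rep_rel N n r J \<longleftrightarrow>
     \<rho> \<in> reps N n r J \<and> \<sigma> \<in> reps N n r J \<and> (\<exists>a. a \<noteq> 0 \<and> \<sigma> = (\<lambda>\<beta>. a * \<rho> \<beta>))"
  by (simp add: rep_rel_def)

lemma equiv_rep_rel: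
  fixes N :: "'a::{comm_monoid_mult, mult_zero} multiset set"
  assumes "tract N"
  shows "equiv (reps N n r J) (rep_rel N n r J)"
proof (rule equivI)
  have one: "(1::'a) \<noteq> 0" and mult: "\<And>a b::'a. a \<noteq> 0 \<Longrightarrow> b \<noteq> 0 \<Longrightarrow> a * b \<noteq> 0"
    and inverse: "\<And>a::'a. a \<noteq> 0 \<Longrightarrow> \<exists>b. a * b = 1"
    using assms by (auto simp: tract_def)
  show "rep_rel N n r J \<subseteq> reps N n r J \<times> reps N n r J" by (auto simp: rep_rel_def)
  show "refl_on (reps N n r J) (rep_rel N n r J)"
    using one by (auto simp: refl_on_def rep_rel_iff intro!: exI[of _ 1])
  show "sym (rep_rel N n r J)"
  proof (rule symI)
    fix \<rho> \<sigma> assume "(\<rho>, \<sigma>) \<in> rep_rel N n r J"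
    then obtain a where a: "\<rho> \<in> reps N n r J" "\<sigma> \<in> reps N n r J" "a \<noteq> 0" "\<sigma> = (\<lambda>\<beta>. a * \<rho> \<beta>)"
      by (auto simp: rep_rel_iff)
    obtain b where "a * b = 1" using inverse[OF a(3)] by blast
    hence "b \<noteq> 0" and "\<rho> = (\<lambda>\<beta>. b * \<sigma> \<beta>)"
      using one by (auto simp: a(4) mult.assoc[symmetric] mult.commute[of b a])
    thus "(\<sigma>, \<rho>) \<in> rep_rel N n r J" using a(1,2) by (auto simp: rep_rel_iff)
  qed
  show "trans (rep_rel N n r J)"
  proof (rule transI)
    fix \<rho> \<sigma> \<tau> assume "(\<rho>, \<sigma>) \<in> rep_rel N n r J" "(\<sigma>, \<tau>) \<in> rep_rel N n r J"
    then obtain a b where "\<rho> \<in> reps N n r J" "\<tau> \<in> reps N n r J" "a \<noteq> 0" "b \<noteq> 0"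
      and "\<tau> = (\<lambda>\<beta>. (b * a) * \<rho> \<beta>)"
      by (auto simp: rep_rel_iff mult.assoc)
    thus "(\<rho>, \<tau>) \<in> rep_rel N n r J" using mult by (auto simp: rep_rel_iff)
  qed
qed

lemma rep_rel_pullback:
  fixes N :: "'a::{comm_monoid_mult, mult_zero} multiset set"
  assumes "poly_emb n r J n' r' J' \<iota>" and "(\<rho>, \<sigma>) \<in> rep_rel N n' r' J'"
  shows "(pullback J \<iota> \<rho>, pullback J \<iota> \<sigma>) \<in> rep_rel N n r J"
  using assms(2) is_rep_pullback_poly_emb[OF assms(1)]
  by (auto simp: rep_rel_iff reps_def pullback_def fun_eq_iff)

lemma rep_rel_of_pullback:
  fixes N :: "'a::{comm_monoid_mult, mult_zero} multiset set"
  assumes onto: "\<iota> ` J = J'" and \<rho>\<sigma>: "\<rho> \<in> reps N n' r' J'" "\<sigma> \<in> reps N n' r' J'"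
    and "(pullback J \<iota> \<rho>, pullback J \<iota> \<sigma>) \<in> rep_rel N n r J"
  shows "(\<rho>, \<sigma>) \<in> rep_rel N n' r' J'"
proof -
  obtain a where "a \<noteq> 0" and a: "pullback J \<iota> \<sigma> = (\<lambda>\<beta>. a * pullback J \<iota> \<rho> \<beta>)"
    using assms(4) by (auto simp: rep_rel_iff)
  have "\<sigma> \<beta> = a * \<rho> \<beta>" for \<beta>
  proof (cases "\<beta> \<in> J'")
    case True
    then obtain \<alpha> where "\<alpha> \<in> J" "\<beta> = \<iota> \<alpha>" using onto by blast
    thus ?thesis using fun_cong[OF a, of \<alpha>] by (simp add: pullback_def)
  next
    case False
    hence "\<rho> \<beta> = 0" "\<sigma> \<beta> = 0" using \<rho>\<sigma> is_rep_outside[of N n' r' J'] by (auto simp: reps_def)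
    thus ?thesis by simp
  qed
  thus ?thesis using \<rho>\<sigma> \<open>a \<noteq> 0\<close> by (auto simp: rep_rel_iff)
qed

theorem theoremE:
  fixes N :: "'a::{comm_monoid_mult, mult_zero} multiset set"
    and n r n' r' :: nat and J J' :: "vec set" and \<iota> :: "vec \<Rightarrow> vec"
  assumes "tract N" and "near_idempotent N"
    and "M_convex n r J" and "M_convex n' r' J'"
    and "poly_emb n r J n' r' J' \<iota>"
  shows "(\<forall>\<rho>\<in>reps N n' r' J'. pullback J \<iota> \<rho> \<in> reps N n r J)
    \<and> (\<forall>\<rho>\<in>reps N n' r' J'.
          Gr_pullback N n r J n' r' J' \<iota> (rep_class N n' r' J' \<rho>) = rep_class N n r J (pullback J \<iota> \<rho>))
    \<and> Gr_pullback N n r J n' r' J' \<iota> \<in> Gr N n' r' J' \<rightarrow> Gr N n r J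
    \<and> (bij_betw \<iota> J J' \<longrightarrow> bij_betw (Gr_pullback N n r J n' r' J' \<iota>) (Gr N n' r' J') (Gr N n r J))"
proof -
  let ?R' = "rep_rel N n' r' J'" and ?R = "rep_rel N n r J" and ?pull = "pullback J \<iota>"
  have equiv: "equiv (reps N n' r' J') ?R'" "equiv (reps N n r J) ?R"
    using equiv_rep_rel[OF assms(1)] by blast+
  have Gr_pullback: "Gr_pullback N n r J n' r' J' \<iota> = (\<lambda>C. ?R `` {?pull (SOME \<rho>. \<rho> \<in> C)})"
    by (simp add: fun_eq_iff Gr_pullback_def rep_class_def)
  have maps: "?pull ` reps N n' r' J' \<subseteq> reps N n r J"
    using is_rep_pullback_poly_emb[OF assms(5)] by (auto simp: reps_def)
  note respects = rep_rel_pullback[OF assms(5)]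
  show ?thesis unfolding Gr_pullback Gr_def rep_class_def
  proof (intro conjI ballI impI)
    show "?pull \<rho> \<in> reps N n r J" if "\<rho> \<in> reps N n' r' J'" for \<rho> using maps that by blast
    show "?R `` {?pull (SOME \<sigma>. \<sigma> \<in> ?R' `` {\<rho>})} = ?R `` {?pull \<rho>}" if "\<rho> \<in> reps N n' r' J'" for \<rho>
      by (rule quotient_map_class[OF equiv respects that])
    show "(\<lambda>C. ?R `` {?pull (SOME \<rho>. \<rho> \<in> C)}) \<in> reps N n' r' J' // ?R' \<rightarrow> reps N n r J // ?R"
      by (rule quotient_map_funcset[OF equiv respects maps])
    assume "bij_betw \<iota> J J'"
    hence onto: "\<iota> ` J = J'" by (rule bij_betw_imp_surj_on)
    have reflects: "(\<rho>, \<sigma>) \<in> ?R'"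
      if "\<rho> \<in> reps N n' r' J'" "\<sigma> \<in> reps N n' r' J'" "(?pull \<rho>, ?pull \<sigma>) \<in> ?R" for \<rho> \<sigma>
      using rep_rel_of_pullback[OF onto that] .
    have onto_reps: "reps N n r J \<subseteq> ?pull ` reps N n' r' J'"
      using poly_emb_pullback_surj[OF assms(5) onto] by (force simp: reps_def)
    show "bij_betw (\<lambda>C. ?R `` {?pull (SOME \<rho>. \<rho> \<in> C)}) (reps N n' r' J' // ?R') (reps N n r J // ?R)"
      by (rule bij_betw_quotient_map[OF equiv]) (fact respects reflects maps onto_reps)+
  qed
qed

end
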